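(* For integers $k,r,n\ge1$ let $$I_{k,r,n}=\int_{\Delta_{k-1}}\Big(\sum_{1\le s\le k}\frac{x_s}{s}\Big)^n d\nu_{k,r}(x).$$ Then: (a) $I_{k,r,n}=\sum_{1\le s_1,\dots,s_n\le k}\frac{1}{s_1s_2\cdots s_n}\cdot\frac{(kr-1)!}{(r-1)!^k}\cdot\frac{\prod_{1\le i\le k}(r-1+\beta_i)!}{(kr+n-1)!}$, where $\beta_i=\beta_i(s)=\#\{j:s_j=i\}$. (b) The quotient $I_{k,r,n}\Big/\Big(\frac{r^n}{kr(kr+1)\cdots(kr+n-1)}\big(1+\frac12+\dots+\frac1k\big)^n\Big)$ is bounded below by $1$ and above by $1+\frac13\sum_{m=2}^n\frac{2^m n!}{(n-m)!}\big(1+\frac12+\dots+\frac1k\big)^{-m}=1+O((\log k)^{-2})$. (c) Consequently $I_{k,r,n}=\frac1{k^n}\Big(\big(1+\frac12+\dots+\frac1k\big)^n+O((\log k)^{n-2})\Big)=\frac{(\log k+\gamma)^n+O((\log k)^{n-2})}{k^n}$ as $k\to\infty$, where $\gamma$ is the Euler–Mascheroni constant (the $O$ constants depending on $n,r$).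
   Context: $\Delta_{k-1}=\{x\in\mathbb R^k:x_s\ge0,\ \sum_sx_s=1\}$ with $dx=dx_1\wedge\dots\wedge dx_{k-1}$, and $d\nu_{k,r}(x)=(kr-1)!\,\frac{(x_1\cdots x_k)^{r-1}}{(r-1)!^k}\,dx$, a probability measure on $\Delta_{k-1}$. *)

theory Defs
  imports "HOL-Analysis.Analysis" "HOL-Library.Landau_Symbols"
begin

text \<open>Coordinates: a point of the simplex is parametrised by its first k-1 coordinates
  y 1, ..., y (k-1) (the chart used for dx = dx_1 ... dx_(k-1)); the last coordinate is
  x_k = 1 - (x_1 + ... + x_(k-1)).\<close>

definition simplex_pt :: "nat \<Rightarrow> (nat \<Rightarrow> real) \<Rightarrow> nat \<Rightarrow> real" where
  "simplex_pt k y = (\<lambda>s. if s = k then 1 - (\<Sum>i\<in>{1..<k}. y i) else y s)"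

definition chart_measure :: "nat \<Rightarrow> (nat \<Rightarrow> real) measure" where
  "chart_measure k = PiM {1..<k} (\<lambda>_. lborel)"

definition simplex_chart :: "nat \<Rightarrow> (nat \<Rightarrow> real) set" where
  "simplex_chart k = {y \<in> space (chart_measure k). \<forall>s\<in>{1..k}. simplex_pt k y s \<ge> 0}"

definition nu :: "nat \<Rightarrow> nat \<Rightarrow> (nat \<Rightarrow> real) measure" where
  "nu k r = density (chart_measure k)
     (\<lambda>y. ennreal (indicator (simplex_chart k) y * (fact (k*r - 1) / fact (r - 1) ^ k)
                   * (\<Prod>s\<in>{1..k}. simplex_pt k y s ^ (r - 1))))"

definition I_krn :: "nat \<Rightarrow> nat \<Rightarrow> nat \<Rightarrow> real" where
  "I_krn k r n = integral\<^sup>L (nu k r) (\<lambda>y. (\<Sum>s\<in>{1..k}. simplex_pt k y s / real s) ^ n)"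

definition beta_count :: "nat \<Rightarrow> (nat \<Rightarrow> nat) \<Rightarrow> nat \<Rightarrow> nat" where
  "beta_count n s i = card {j \<in> {1..n}. s j = i}"

definition upper_bound :: "nat \<Rightarrow> nat \<Rightarrow> real" where
  "upper_bound k n = 1 + 1/3 * (\<Sum>m\<in>{2..n}. 2 ^ m * fact n / fact (n - m) / harm k ^ m)"

end

theory Submission
  imports Defs
begin

text \<open>
  (a) Expanding the \<open>n\<close>-th power as a sum over words \<open>\<sigma> : {1..n} \<rightarrow> {1..k}\<close>, each word
  contributes a monomial \<open>\<prod>\<^sub>i x\<^sub>i\<^sup>r\<^sup>-\<^sup>1\<^sup>+\<^sup>\<beta>\<^sup>\<^sub>i\<close>, whose integral is the Dirichlet integral
  \<open>\<prod>\<^sub>i (r-1+\<beta>\<^sub>i)! / (kr+n-1)!\<close>; the latter is computed by integrating out one coordinate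
  at a time, each step being a Beta integral.

  (b) Each word term is the main factor \<open>r\<^sup>n/(kr)\<cdots>(kr+n-1)\<close> times \<open>\<prod>\<^sub>t 1/\<sigma>\<^sub>t\<close> times an excess
  weight \<open>\<ge> 1\<close>; since \<open>\<Sum>\<^sub>\<sigma> \<prod>\<^sub>t 1/\<sigma>\<^sub>t = H\<^sub>k\<^sup>n\<close> this gives the lower bound. For the upper bound we
  allow arbitrary position-dependent letter weights: appending a letter to a word either adds
  a fresh factor or repeats an earlier position, which yields a recursion in the word length.
  Induction along it bounds the weighted sums by an explicit majorant polynomial in \<open>H\<^sub>k\<close>,
  which is at most the stated constant times \<open>H\<^sub>k\<^sup>n\<close>.

  (c) The constant is \<open>1 + O((log k)\<^sup>-\<^sup>2)\<close>, the main factor is \<open>k\<^sup>-\<^sup>n (1 + O(1/k))\<close> and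
  \<open>H\<^sub>k = log k + \<gamma> + O(1/k)\<close>; the three resulting error terms are combined by the Landau calculus.
\<close>

section \<open>Beta and Dirichlet integrals\<close>

text \<open>Using it as integrand
  lets the positivity constraints of the simplex be carried by the integrand itself.\<close>
definition pos_pow :: "nat \<Rightarrow> real \<Rightarrow> real" where
  "pos_pow c z = (if 0 \<le> z then z ^ c else 0)"

lemma pos_pow_nonneg [simp]: "0 \<le> pos_pow c z"
  by (simp add: pos_pow_def)

lemma pos_pow_measurable [measurable]: "pos_pow c \<in> borel_measurable borel"
  unfolding pos_pow_def by measurable

lemma beta_integral_unit:
  fixes c b :: nat
  shows "(\<integral>\<^sup>+y. ennreal (indicator {0..1} y * (y^c * (1-y)^b)) \<partial>lborel)
         = ennreal (fact c * fact b / fact (c+b+1))"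
proof -
  have "((\<lambda>t. t powr (real (c+1) - 1) * (1 - t) powr (real (b+1) - 1))
          has_integral Beta (real (c+1)) (real (b+1))) {0..1}"
    by (rule has_integral_Beta_real) auto
  then have int: "((\<lambda>t::real. t^c * (1-t)^b) has_integral Beta (real (c+1)) (real (b+1))) {0..1}"
    by (rule has_integral_spike_finite_eq[of "{0,1}", THEN iffD1, rotated -1])
       (auto simp: powr_realpow)
  have "Beta (real (c+1)) (real (b+1)) = fact c * fact b / fact (c+b+1)"
    using Gamma_fact[of c, where 'a=real] Gamma_fact[of b, where 'a=real]
          Gamma_fact[of "c+b+1", where 'a=real]
    by (simp add: Beta_def add_ac)
  moreover have "(\<integral>\<^sup>+y. ennreal (indicator {0..1} y * (y^c * (1-y)^b)) \<partial>lborel)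
      = ennreal (Beta (real (c+1)) (real (b+1)))"
    by (rule nn_integral_has_integral_lebesgue[OF _ int]) auto
  ultimately show ?thesis by simp
qed

lemma beta_integral_scaled:
  fixes c b :: nat and u :: real
  assumes "u > 0"
  shows "(\<integral>\<^sup>+y. ennreal (indicator {0..u} y * (y^c * (u-y)^b)) \<partial>lborel)
         = ennreal (u^(c+b+1) * (fact c * fact b / fact (c+b+1)))"
proof -
  have rescale: "ennreal (indicator {0..u} (0 + u*x) * ((0 + u*x)^c * (u - (0 + u*x))^b))
      = ennreal (u^(c+b)) * ennreal (indicator {0..1} x * (x^c * (1-x)^b))" for x
  proof -
    have "indicator {0..u} (u*x) = (indicator {0..1} x :: real)"
      using assms by (auto simp: indicator_def zero_le_mult_iff mult_le_cancel_left1)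
    moreover have "(u*x)^c * (u - u*x)^b = u^(c+b) * (x^c * (1-x)^b)"
      unfolding right_diff_distrib'[of u 1 x, simplified, symmetric]
      by (simp add: power_add power_mult_distrib mult_ac)
    ultimately show ?thesis
      using assms by (simp add: ennreal_mult'[symmetric] mult_ac)
  qed
  have "(\<integral>\<^sup>+y. ennreal (indicator {0..u} y * (y^c * (u-y)^b)) \<partial>lborel)
      = ennreal \<bar>u\<bar> * (\<integral>\<^sup>+x. ennreal (u^(c+b)) * ennreal (indicator {0..1} x * (x^c * (1-x)^b)) \<partial>lborel)"
    unfolding rescale[symmetric] by (rule nn_integral_real_affine) (use assms in auto)
  also have "\<dots> = ennreal u * (ennreal (u^(c+b)) * ennreal (fact c * fact b / fact (c+b+1)))"
    using assms by (subst nn_integral_cmult) (auto simp: beta_integral_unit)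
  also have "\<dots> = ennreal (u^(c+b+1) * (fact c * fact b / fact (c+b+1)))"
    using assms by (simp add: ennreal_mult[symmetric] mult_ac)
  finally show ?thesis .
qed

lemma pos_pow_convolution:
  fixes c b :: nat and s :: real
  shows "(\<integral>\<^sup>+y. ennreal (pos_pow c y * pos_pow b (s - y)) \<partial>lborel)
         = ennreal (pos_pow (c+b+1) s * (fact c * fact b / fact (c+b+1)))"
proof (cases "s > 0")
  case True
  have "(\<lambda>y. ennreal (pos_pow c y * pos_pow b (s - y)))
      = (\<lambda>y. ennreal (indicator {0..s} y * (y^c * (s-y)^b)))"
    by (auto simp: pos_pow_def indicator_def fun_eq_iff)
  then show ?thesis
    using beta_integral_scaled[OF True, of c b] True by (simp add: pos_pow_def)
next
  case False
  have "AE y in lborel. ennreal (pos_pow c y * pos_pow b (s - y)) = 0"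
    using AE_lborel_singleton[of 0] by eventually_elim (use False in \<open>auto simp: pos_pow_def\<close>)
  then have "(\<integral>\<^sup>+y. ennreal (pos_pow c y * pos_pow b (s - y)) \<partial>lborel) = 0"
    by (simp add: nn_integral_0_iff_AE)
  then show ?thesis
    using False by (cases "s = 0") (auto simp: pos_pow_def)
qed

interpretation lborel_product: product_sigma_finite "(\<lambda>_::nat. lborel :: real measure)"
  by standard

lemma integrate_out_coordinate:
  fixes I :: "nat set" and a :: "nat \<Rightarrow> nat" and x :: "nat \<Rightarrow> real"
  assumes "finite I" "i \<notin> I"
  shows "(\<integral>\<^sup>+z. ennreal ((\<Prod>j\<in>insert i I. pos_pow (a j) ((x(i:=z)) j))
                  * pos_pow b (t - (\<Sum>j\<in>insert i I. (x(i:=z)) j))) \<partial>lborel)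
     = ennreal ((\<Prod>j\<in>I. pos_pow (a j) (x j)) * pos_pow (a i + b + 1) (t - (\<Sum>j\<in>I. x j)))
       * ennreal (fact (a i) * fact b / fact (a i + b + 1))"
proof -
  have "(\<Prod>j\<in>I. pos_pow (a j) ((x(i:=z)) j)) = (\<Prod>j\<in>I. pos_pow (a j) (x j))"
       "(\<Sum>j\<in>I. (x(i:=z)) j) = (\<Sum>j\<in>I. x j)" for z
    using assms by (auto intro!: prod.cong sum.cong)
  then have "(\<integral>\<^sup>+z. ennreal ((\<Prod>j\<in>insert i I. pos_pow (a j) ((x(i:=z)) j))
                 * pos_pow b (t - (\<Sum>j\<in>insert i I. (x(i:=z)) j))) \<partial>lborel)
     = (\<integral>\<^sup>+z. ennreal (\<Prod>j\<in>I. pos_pow (a j) (x j))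
               * ennreal (pos_pow (a i) z * pos_pow b ((t - (\<Sum>j\<in>I. x j)) - z)) \<partial>lborel)"
    using assms by (intro nn_integral_cong) (simp add: ennreal_mult'[symmetric] prod_nonneg algebra_simps)
  also have "\<dots> = ennreal (\<Prod>j\<in>I. pos_pow (a j) (x j))
      * (\<integral>\<^sup>+z. ennreal (pos_pow (a i) z * pos_pow b ((t - (\<Sum>j\<in>I. x j)) - z)) \<partial>lborel)"
    by (rule nn_integral_cmult) measurable
  finally show ?thesis
    by (simp add: pos_pow_convolution ennreal_mult'[symmetric] prod_nonneg mult_ac)
qed

lemma dirichlet_integral:
  fixes I :: "nat set" and a :: "nat \<Rightarrow> nat"
  assumes "finite I"
  shows "(\<integral>\<^sup>+y. ennreal ((\<Prod>j\<in>I. pos_pow (a j) (y j)) * pos_pow b (t - (\<Sum>j\<in>I. y j)))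
            \<partial>PiM I (\<lambda>_. lborel))
     = ennreal (pos_pow (sum a I + b + card I) t
                * ((\<Prod>j\<in>I. fact (a j)) * fact b / fact (sum a I + b + card I)))"
  using assms
proof (induction I arbitrary: b rule: finite_induct)
  case empty
  show ?case by (simp add: PiM_empty nn_integral_count_space_finite)
next
  case (insert i I)
  define B where "B = (fact (a i) * fact b / fact (a i + b + 1) :: real)"
  have B: "B \<ge> 0" by (simp add: B_def)
  have "(\<integral>\<^sup>+y. ennreal ((\<Prod>j\<in>insert i I. pos_pow (a j) (y j)) * pos_pow b (t - (\<Sum>j\<in>insert i I. y j)))
           \<partial>PiM (insert i I) (\<lambda>_. lborel))
     = (\<integral>\<^sup>+x. (\<integral>\<^sup>+z. ennreal ((\<Prod>j\<in>insert i I. pos_pow (a j) ((x(i:=z)) j))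
                   * pos_pow b (t - (\<Sum>j\<in>insert i I. (x(i:=z)) j))) \<partial>lborel) \<partial>PiM I (\<lambda>_. lborel))"
    by (rule lborel_product.product_nn_integral_insert[OF insert.hyps]) measurable
  also have "\<dots> = (\<integral>\<^sup>+x. ennreal ((\<Prod>j\<in>I. pos_pow (a j) (x j)) * pos_pow (a i + b + 1) (t - (\<Sum>j\<in>I. x j)))
           \<partial>PiM I (\<lambda>_. lborel)) * B"
    unfolding integrate_out_coordinate[OF insert.hyps] B_def[symmetric]
    by (rule nn_integral_multc) measurable
  also have "\<dots> = ennreal (pos_pow (sum a I + (a i + b + 1) + card I) t
       * ((\<Prod>j\<in>I. fact (a j)) * fact (a i + b + 1) / fact (sum a I + (a i + b + 1) + card I)) * B)"
    by (simp only: insert.IH ennreal_mult''[OF B])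
  also have "sum a I + (a i + b + 1) + card I = sum a (insert i I) + b + card (insert i I)"
    using insert.hyps by simp
  finally show ?case
    using insert.hyps by (simp add: B_def mult_ac add_ac del: fact_Suc)
qed

lemma simplex_pt_measurable [measurable]:
  "(\<lambda>y. simplex_pt k y s) \<in> borel_measurable (chart_measure k)"
proof (cases "s = k \<or> s \<in> {1..<k}")
  case True
  then show ?thesis unfolding simplex_pt_def chart_measure_def by auto
next
  case False
  text \<open>Outside the index set the coordinate is the constant value of an extensional function.\<close>
  have "(\<lambda>y. undefined :: real) \<in> borel_measurable (chart_measure k)" by simp
  then show ?thesis
    by (rule measurable_cong[THEN iffD1, rotated])
       (use False in \<open>auto simp: simplex_pt_def chart_measure_def space_PiM PiE_def extensional_def\<close>)
qed

lemma simplex_chart_sets [measurable]: "simplex_chart k \<in> sets (chart_measure k)"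
proof -
  have "{y \<in> space (chart_measure k). \<forall>s\<in>{1..k}. simplex_pt k y s \<ge> 0} \<in> sets (chart_measure k)"
    by measurable
  then show ?thesis by (simp add: simplex_chart_def)
qed

lemma indicator_simplex_monomial:
  assumes "y \<in> space (chart_measure k)"
  shows "indicator (simplex_chart k) y * (\<Prod>s\<in>{1..k}. simplex_pt k y s ^ e s)
       = (\<Prod>s\<in>{1..k}. pos_pow (e s) (simplex_pt k y s))"
proof (cases "y \<in> simplex_chart k")
  case True
  then show ?thesis by (auto simp: simplex_chart_def pos_pow_def intro!: prod.cong)
next
  case False
  with assms obtain s where "s \<in> {1..k}" "simplex_pt k y s < 0"
    by (auto simp: simplex_chart_def not_le)
  then have "(\<Prod>s\<in>{1..k}. pos_pow (e s) (simplex_pt k y s)) = 0"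
    by (intro prod_zero bexI[of _ s]) (auto simp: pos_pow_def)
  then show ?thesis using False by simp
qed

lemma simplex_dirichlet_integral:
  assumes "k \<ge> 1"
  shows "(\<integral>\<^sup>+y. ennreal (\<Prod>s\<in>{1..k}. pos_pow (e s) (simplex_pt k y s)) \<partial>chart_measure k)
       = ennreal ((\<Prod>s\<in>{1..k}. fact (e s)) / fact (sum e {1..k} + k - 1))"
proof -
  have ins: "{1..k} = insert k {1..<k}" using assms by auto
  have split: "(\<Prod>s\<in>{1..k}. pos_pow (e s) (simplex_pt k y s))
       = (\<Prod>j\<in>{1..<k}. pos_pow (e j) (y j)) * pos_pow (e k) (1 - (\<Sum>j\<in>{1..<k}. y j))" for y
  proof -
    have "(\<Prod>s\<in>{1..<k}. pos_pow (e s) (simplex_pt k y s)) = (\<Prod>j\<in>{1..<k}. pos_pow (e j) (y j))"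
      by (intro prod.cong) (auto simp: simplex_pt_def)
    then show ?thesis unfolding ins by (simp add: simplex_pt_def mult_ac)
  qed
  have "sum e {1..<k} + e k + card {1..<k} = sum e {1..k} + k - 1"
    unfolding ins using assms by simp
  moreover have "(\<Prod>j\<in>{1..<k}. fact (e j)) * fact (e k) = (\<Prod>s\<in>{1..k}. fact (e s) :: real)"
    unfolding ins by (simp add: mult_ac)
  ultimately show ?thesis
    unfolding split chart_measure_def
    by (subst dirichlet_integral) (simp_all add: pos_pow_def)
qed

section \<open>Words and letter counts\<close>

lemma prod_over_word:
  fixes p :: "nat \<Rightarrow> 'a::comm_monoid_mult"
  assumes "\<sigma> \<in> {1..n} \<rightarrow>\<^sub>E {1..k}"
  shows "(\<Prod>j\<in>{1..n}. p (\<sigma> j)) = (\<Prod>i\<in>{1..k}. p i ^ beta_count n \<sigma> i)"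
proof -
  have "(\<Prod>j\<in>{1..n}. p (\<sigma> j)) = (\<Prod>i\<in>{1..k}. \<Prod>j\<in>{j \<in> {1..n}. \<sigma> j = i}. p (\<sigma> j))"
    using assms by (intro prod.group[symmetric]) auto
  also have "\<dots> = (\<Prod>i\<in>{1..k}. \<Prod>j\<in>{j \<in> {1..n}. \<sigma> j = i}. p i)"
    by (intro prod.cong) auto
  finally show ?thesis by (simp add: beta_count_def)
qed

lemma sum_over_word:
  fixes w :: "nat \<Rightarrow> real"
  assumes "\<sigma> \<in> {1..n} \<rightarrow>\<^sub>E {1..k}"
  shows "(\<Sum>j\<in>{1..n}. w (\<sigma> j)) = (\<Sum>i\<in>{1..k}. w i * real (beta_count n \<sigma> i))"
proof -
  have "(\<Sum>j\<in>{1..n}. w (\<sigma> j)) = (\<Sum>i\<in>{1..k}. \<Sum>j\<in>{j \<in> {1..n}. \<sigma> j = i}. w (\<sigma> j))"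
    using assms by (intro sum.group[symmetric]) auto
  also have "\<dots> = (\<Sum>i\<in>{1..k}. \<Sum>j\<in>{j \<in> {1..n}. \<sigma> j = i}. w i)"
    by (intro sum.cong) auto
  finally show ?thesis by (simp add: beta_count_def mult.commute)
qed

lemma sum_beta_count:
  assumes "\<sigma> \<in> {1..n} \<rightarrow>\<^sub>E {1..k}"
  shows "(\<Sum>i\<in>{1..k}. beta_count n \<sigma> i) = n"
  using sum_over_word[OF assms, of "\<lambda>_. 1"] by (simp flip: of_nat_sum)

section \<open>Part (a): the integral as a sum over words\<close>

definition nu_density :: "nat \<Rightarrow> nat \<Rightarrow> (nat \<Rightarrow> real) \<Rightarrow> real" where
  "nu_density k r y = indicator (simplex_chart k) y * (fact (k*r - 1) / fact (r - 1) ^ k)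
                      * (\<Prod>s\<in>{1..k}. simplex_pt k y s ^ (r - 1))"

lemma nu_density_measurable [measurable]: "nu_density k r \<in> borel_measurable (chart_measure k)"
  unfolding nu_density_def by measurable

lemma nu_density_nonneg: "y \<in> space (chart_measure k) \<Longrightarrow> 0 \<le> nu_density k r y"
  unfolding nu_density_def
  by (auto simp: indicator_def simplex_chart_def intro!: divide_nonneg_nonneg mult_nonneg_nonneg prod_nonneg)

definition word_term :: "nat \<Rightarrow> nat \<Rightarrow> nat \<Rightarrow> (nat \<Rightarrow> nat) \<Rightarrow> real" where
  "word_term k r n \<sigma> = 1 / (\<Prod>j\<in>{1..n}. real (\<sigma> j)) * (fact (k*r - 1) / fact (r - 1) ^ k)
     * (\<Prod>i\<in>{1..k}. fact (r - 1 + beta_count n \<sigma> i)) / fact (k*r + n - 1)"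

lemma word_term_nonneg: "0 \<le> word_term k r n \<sigma>"
  unfolding word_term_def by (intro divide_nonneg_nonneg mult_nonneg_nonneg prod_nonneg) auto

lemma nu_density_power_expansion:
  assumes y: "y \<in> space (chart_measure k)"
  shows "nu_density k r y * (\<Sum>s\<in>{1..k}. simplex_pt k y s / real s) ^ n
       = (\<Sum>\<sigma>\<in>{1..n} \<rightarrow>\<^sub>E {1..k}. fact (k*r - 1) / fact (r - 1) ^ k / (\<Prod>j\<in>{1..n}. real (\<sigma> j))
            * (\<Prod>i\<in>{1..k}. pos_pow (r - 1 + beta_count n \<sigma> i) (simplex_pt k y i)))"
proof -
  have "(\<Sum>s\<in>{1..k}. simplex_pt k y s / real s) ^ n
      = (\<Sum>\<sigma>\<in>{1..n} \<rightarrow>\<^sub>E {1..k}. \<Prod>j\<in>{1..n}. simplex_pt k y (\<sigma> j) / real (\<sigma> j))"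
    by (subst prod_sum_PiE[symmetric]) auto
  moreover have "nu_density k r y * (\<Prod>j\<in>{1..n}. simplex_pt k y (\<sigma> j) / real (\<sigma> j))
      = fact (k*r - 1) / fact (r - 1) ^ k / (\<Prod>j\<in>{1..n}. real (\<sigma> j))
            * (\<Prod>i\<in>{1..k}. pos_pow (r - 1 + beta_count n \<sigma> i) (simplex_pt k y i))"
    if \<sigma>: "\<sigma> \<in> {1..n} \<rightarrow>\<^sub>E {1..k}" for \<sigma>
  proof -
    have "(\<Prod>j\<in>{1..n}. simplex_pt k y (\<sigma> j) / real (\<sigma> j))
        = (\<Prod>i\<in>{1..k}. simplex_pt k y i ^ beta_count n \<sigma> i) / (\<Prod>j\<in>{1..n}. real (\<sigma> j))"
      using prod_over_word[OF \<sigma>, of "simplex_pt k y"] by (simp add: prod_dividef)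
    then have "nu_density k r y * (\<Prod>j\<in>{1..n}. simplex_pt k y (\<sigma> j) / real (\<sigma> j))
        = fact (k*r - 1) / fact (r - 1) ^ k / (\<Prod>j\<in>{1..n}. real (\<sigma> j))
          * (indicator (simplex_chart k) y
             * (\<Prod>i\<in>{1..k}. simplex_pt k y i ^ (r - 1 + beta_count n \<sigma> i)))"
      unfolding nu_density_def by (simp add: power_add prod.distrib mult_ac)
    also have "\<dots> = fact (k*r - 1) / fact (r - 1) ^ k / (\<Prod>j\<in>{1..n}. real (\<sigma> j))
            * (\<Prod>i\<in>{1..k}. pos_pow (r - 1 + beta_count n \<sigma> i) (simplex_pt k y i))"
      by (simp only: indicator_simplex_monomial[OF y])
    finally show ?thesis .
  qed
  ultimately show ?thesis by (simp add: sum_distrib_left)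
qed

lemma word_monomial_integral:
  assumes k: "k \<ge> 1" and r: "r \<ge> 1" and \<sigma>: "\<sigma> \<in> {1..n} \<rightarrow>\<^sub>E {1..k}"
  shows "(\<integral>\<^sup>+y. ennreal (fact (k*r - 1) / fact (r - 1) ^ k / (\<Prod>j\<in>{1..n}. real (\<sigma> j))
            * (\<Prod>i\<in>{1..k}. pos_pow (r - 1 + beta_count n \<sigma> i) (simplex_pt k y i))) \<partial>chart_measure k)
       = ennreal (word_term k r n \<sigma>)"
proof -
  define c where "c = fact (k*r - 1) / fact (r - 1) ^ k / (\<Prod>j\<in>{1..n}. real (\<sigma> j))"
  have c: "0 \<le> c" unfolding c_def by (intro divide_nonneg_nonneg prod_nonneg) auto
  have "(\<Sum>i\<in>{1..k}. r - 1 + beta_count n \<sigma> i) = k * (r - 1) + n"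
    using sum_beta_count[OF \<sigma>] by (simp add: sum.distrib)
  then have exps: "(\<Sum>i\<in>{1..k}. r - 1 + beta_count n \<sigma> i) + k - 1 = k*r + n - 1"
    using k r by (cases r) (auto simp: algebra_simps)
  have "(\<integral>\<^sup>+y. ennreal (c * (\<Prod>i\<in>{1..k}. pos_pow (r - 1 + beta_count n \<sigma> i) (simplex_pt k y i)))
               \<partial>chart_measure k)
      = ennreal c * (\<integral>\<^sup>+y. ennreal (\<Prod>i\<in>{1..k}. pos_pow (r - 1 + beta_count n \<sigma> i) (simplex_pt k y i))
               \<partial>chart_measure k)"
    unfolding ennreal_mult'[OF c] by (rule nn_integral_cmult) measurable
  also have "\<dots> = ennreal c * ennreal ((\<Prod>i\<in>{1..k}. fact (r - 1 + beta_count n \<sigma> i)) / fact (k*r + n - 1))"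
    by (simp only: simplex_dirichlet_integral[OF k] exps)
  also have "\<dots> = ennreal (word_term k r n \<sigma>)"
    unfolding ennreal_mult'[OF c, symmetric] by (simp add: word_term_def c_def mult_ac)
  finally show ?thesis unfolding c_def .
qed

theorem I_krn_word_sum:
  assumes k: "k \<ge> 1" and r: "r \<ge> 1"
  shows "I_krn k r n = (\<Sum>\<sigma>\<in>{1..n} \<rightarrow>\<^sub>E {1..k}. word_term k r n \<sigma>)"
proof -
  define f where "f y = (\<Sum>s\<in>{1..k}. simplex_pt k y s / real s) ^ n" for y
  define T where "T \<sigma> y = fact (k*r - 1) / fact (r - 1) ^ k / (\<Prod>j\<in>{1..n}. real (\<sigma> j))
            * (\<Prod>i\<in>{1..k}. pos_pow (r - 1 + beta_count n \<sigma> i) (simplex_pt k y i))" for \<sigma> y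
  have T: "0 \<le> T \<sigma> y" for \<sigma> y
    unfolding T_def by (intro mult_nonneg_nonneg divide_nonneg_nonneg prod_nonneg) auto
  have expand: "nu_density k r y * f y = (\<Sum>\<sigma>\<in>{1..n} \<rightarrow>\<^sub>E {1..k}. T \<sigma> y)"
    if "y \<in> space (chart_measure k)" for y
    unfolding f_def T_def by (rule nu_density_power_expansion[OF that])
  have fm: "f \<in> borel_measurable (chart_measure k)"
    unfolding f_def by measurable
  have nu_eq: "nu k r = density (chart_measure k) (\<lambda>y. ennreal (nu_density k r y))"
    unfolding nu_def nu_density_def ..
  have "AE y in chart_measure k. 0 \<le> nu_density k r y"
    by (rule AE_I2) (rule nu_density_nonneg)
  then have "I_krn k r n = (\<integral>y. nu_density k r y * f y \<partial>chart_measure k)"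
    unfolding I_krn_def f_def[symmetric] nu_eq
    using integral_density[OF fm nu_density_measurable] by simp
  also have "\<dots> = enn2real (\<integral>\<^sup>+y. ennreal (nu_density k r y * f y) \<partial>chart_measure k)"
    using fm by (intro integral_eq_nn_integral) (auto simp: expand intro!: AE_I2 sum_nonneg T)
  also have "(\<integral>\<^sup>+y. ennreal (nu_density k r y * f y) \<partial>chart_measure k)
      = (\<integral>\<^sup>+y. (\<Sum>\<sigma>\<in>{1..n} \<rightarrow>\<^sub>E {1..k}. ennreal (T \<sigma> y)) \<partial>chart_measure k)"
    by (intro nn_integral_cong) (simp add: expand sum_ennreal T)
  also have "\<dots> = (\<Sum>\<sigma>\<in>{1..n} \<rightarrow>\<^sub>E {1..k}. \<integral>\<^sup>+y. ennreal (T \<sigma> y) \<partial>chart_measure k)"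
    by (rule nn_integral_sum) (simp add: T_def)
  also have "\<dots> = (\<Sum>\<sigma>\<in>{1..n} \<rightarrow>\<^sub>E {1..k}. ennreal (word_term k r n \<sigma>))"
    unfolding T_def by (intro sum.cong refl word_monomial_integral[OF k r])
  finally show ?thesis
    by (simp add: sum_ennreal word_term_nonneg sum_nonneg)
qed

section \<open>Part (b): factoring out the main term\<close>

text \<open>It equals \<open>1\<close> exactly for
  words without repeated letters, and measures how far the integral exceeds the main term.\<close>
definition word_weight :: "nat \<Rightarrow> nat \<Rightarrow> nat \<Rightarrow> (nat \<Rightarrow> nat) \<Rightarrow> real" where
  "word_weight k r m \<sigma> = (\<Prod>i\<in>{1..k}. pochhammer (real r) (beta_count m \<sigma> i) / real r ^ beta_count m \<sigma> i)"

lemma word_weight_ge_1: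
  assumes "r \<ge> 1"
  shows "word_weight k r m \<sigma> \<ge> 1"
  unfolding word_weight_def
proof (intro prod_ge_1)
  fix i
  have "real r ^ beta_count m \<sigma> i = (\<Prod>j\<in>{0..<beta_count m \<sigma> i}. real r)" by simp
  also have "\<dots> \<le> pochhammer (real r) (beta_count m \<sigma> i)"
    unfolding pochhammer_prod by (intro prod_mono) auto
  finally show "1 \<le> pochhammer (real r) (beta_count m \<sigma> i) / real r ^ beta_count m \<sigma> i"
    using assms by simp
qed

lemma fact_add_pochhammer: "fact (a + b) = (fact a * pochhammer (real a + 1) b :: real)"
  using pochhammer_product'[of "1::real" a b] by (simp add: pochhammer_fact add.commute)

definition main_factor :: "nat \<Rightarrow> nat \<Rightarrow> nat \<Rightarrow> real" where
  "main_factor k r n = real r ^ n / (\<Prod>j\<in>{0..<n}. real (k*r + j))"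

lemma main_factor_pos:
  assumes "k \<ge> 1" "r \<ge> 1"
  shows "main_factor k r n > 0"
  unfolding main_factor_def using assms
  by (intro divide_pos_pos prod_pos) (auto simp: of_nat_less_iff[symmetric] simp del: of_nat_add of_nat_mult)

lemma word_term_factorization:
  assumes k: "k \<ge> 1" and r: "r \<ge> 1" and \<sigma>: "\<sigma> \<in> {1..n} \<rightarrow>\<^sub>E {1..k}"
  shows "word_term k r n \<sigma>
       = main_factor k r n * ((\<Prod>t\<in>{1..n}. 1 / real (\<sigma> t)) * word_weight k r n \<sigma>)"
proof -
  have kr: "k * r \<ge> 1" using k r by (simp add: one_le_mult_iff)
  have "fact (r - 1 + beta_count n \<sigma> i) = (fact (r - 1) * pochhammer (real r) (beta_count n \<sigma> i) :: real)" for i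
    using fact_add_pochhammer[of "r - 1" "beta_count n \<sigma> i"] r by (simp add: of_nat_diff)
  then have facts: "(\<Prod>i\<in>{1..k}. fact (r - 1 + beta_count n \<sigma> i))
      = fact (r - 1) ^ k * (\<Prod>i\<in>{1..k}. pochhammer (real r) (beta_count n \<sigma> i) :: real)"
    by (simp add: prod.distrib)
  have rising: "fact (k*r + n - 1) = (fact (k*r - 1) * (\<Prod>j\<in>{0..<n}. real (k*r + j)) :: real)"
  proof -
    have "k*r + n - 1 = (k*r - 1) + n" using kr by simp
    then show ?thesis using fact_add_pochhammer[of "k*r - 1" n] kr by (simp add: of_nat_diff pochhammer_prod)
  qed
  have "real r ^ n = (\<Prod>i\<in>{1..k}. real r ^ beta_count n \<sigma> i)"
    using power_sum[of "real r" "beta_count n \<sigma>" "{1..k}"] sum_beta_count[OF \<sigma>] by simp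
  then have weight: "(\<Prod>i\<in>{1..k}. pochhammer (real r) (beta_count n \<sigma> i)) = word_weight k r n \<sigma> * real r ^ n"
    using r unfolding word_weight_def by (simp add: prod.distrib[symmetric])
  have "(\<Prod>j\<in>{0..<n}. real (k*r + j)) > 0"
    using kr by (intro prod_pos) (simp add: of_nat_less_iff[symmetric] del: of_nat_add of_nat_mult)
  then show ?thesis
    unfolding word_term_def main_factor_def facts weight rising by (simp add: prod_dividef field_simps)
qed

lemma harm_eq: "harm k = (\<Sum>v\<in>{1..k}. 1 / real v)"
  by (simp add: harm_def divide_inverse)

lemma harm_power_word_sum: "harm k ^ n = (\<Sum>\<sigma>\<in>{1..n} \<rightarrow>\<^sub>E {1..k}. \<Prod>t\<in>{1..n}. 1 / real (\<sigma> t))"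
  unfolding harm_eq by (subst prod_sum_PiE[symmetric]) auto

section \<open>Weighted word sums and their recursion\<close>

text \<open>To bound the excess weights we allow an arbitrary weight \<open>z t v\<close> for letter \<open>v\<close> at
  position \<open>t\<close>; the case of interest is \<open>z t v = 1/v\<close>.\<close>
definition weighted_word_sum :: "nat \<Rightarrow> nat \<Rightarrow> nat \<Rightarrow> (nat \<Rightarrow> nat \<Rightarrow> real) \<Rightarrow> real" where
  "weighted_word_sum k r m z
     = (\<Sum>\<sigma>\<in>{1..m} \<rightarrow>\<^sub>E {1..k}. (\<Prod>t\<in>{1..m}. z t (\<sigma> t)) * word_weight k r m \<sigma>)"

lemma sum_words_Suc:
  fixes F :: "(nat \<Rightarrow> 'b) \<Rightarrow> real"
  assumes "finite B"
  shows "(\<Sum>\<sigma>\<in>{1..Suc m} \<rightarrow>\<^sub>E B. F \<sigma>) = (\<Sum>\<sigma>\<in>{1..m} \<rightarrow>\<^sub>E B. \<Sum>v\<in>B. F (\<sigma>(Suc m := v)))"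
proof -
  have ins: "{1..Suc m} = insert (Suc m) {1..m}" by auto
  have "(\<Sum>\<sigma>\<in>{1..Suc m} \<rightarrow>\<^sub>E B. F \<sigma>) = (\<Sum>(v,\<sigma>)\<in>B \<times> ({1..m} \<rightarrow>\<^sub>E B). F (\<sigma>(Suc m := v)))"
    unfolding ins
    by (intro sum.reindex_bij_witness[of _ "\<lambda>(v,\<sigma>). \<sigma>(Suc m := v)" "\<lambda>\<sigma>. (\<sigma> (Suc m), \<sigma>(Suc m := undefined))"])
       (auto simp: PiE_def extensional_def)
  also have "\<dots> = (\<Sum>\<sigma>\<in>{1..m} \<rightarrow>\<^sub>E B. \<Sum>v\<in>B. F (\<sigma>(Suc m := v)))"
    by (subst sum.cartesian_product[symmetric]) (rule sum.swap)
  finally show ?thesis .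
qed

lemma beta_count_extend:
  "beta_count (Suc m) (\<sigma>(Suc m := v)) i = beta_count m \<sigma> i + (if i = v then 1 else 0)"
proof -
  have "{j \<in> {1..Suc m}. (\<sigma>(Suc m := v)) j = i}
      = {j \<in> {1..m}. \<sigma> j = i} \<union> (if v = i then {Suc m} else {})"
    by auto
  then show ?thesis by (auto simp: beta_count_def card_insert_if)
qed

lemma word_weight_extend:
  assumes "v \<in> {1..k}" "r \<ge> 1"
  shows "word_weight k r (Suc m) (\<sigma>(Suc m := v))
       = word_weight k r m \<sigma> * ((real r + real (beta_count m \<sigma> v)) / real r)"
proof -
  have "word_weight k r (Suc m) (\<sigma>(Suc m := v))
      = (\<Prod>i\<in>{1..k}. (pochhammer (real r) (beta_count m \<sigma> i) / real r ^ beta_count m \<sigma> i)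
          * (if i = v then (real r + real (beta_count m \<sigma> v)) / real r else 1))"
    unfolding word_weight_def using assms(2)
    by (intro prod.cong refl) (auto simp: beta_count_extend pochhammer_rec' field_simps)
  also have "\<dots> = word_weight k r m \<sigma> * ((real r + real (beta_count m \<sigma> v)) / real r)"
    using assms(1) by (simp only: prod.distrib word_weight_def) (simp add: prod.delta)
  finally show ?thesis .
qed

lemma sum_last_letter:
  fixes z :: "nat \<Rightarrow> nat \<Rightarrow> real"
  assumes \<sigma>: "\<sigma> \<in> {1..m} \<rightarrow>\<^sub>E {1..k}" and r: "r \<ge> 1"
  defines "P \<equiv> (\<Prod>t\<in>{1..m}. z t (\<sigma> t)) * word_weight k r m \<sigma>"
  shows "(\<Sum>v\<in>{1..k}. (\<Prod>t\<in>{1..Suc m}. z t ((\<sigma>(Suc m := v)) t)) * word_weight k r (Suc m) (\<sigma>(Suc m := v)))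
       = P * (\<Sum>v\<in>{1..k}. z (Suc m) v) + 1 / real r * (\<Sum>t\<in>{1..m}. P * z (Suc m) (\<sigma> t))"
proof -
  have "(\<Prod>t\<in>{1..m}. z t ((\<sigma>(Suc m := v)) t)) = (\<Prod>t\<in>{1..m}. z t (\<sigma> t))" for v
    by (intro prod.cong) auto
  then have "(\<Prod>t\<in>{1..Suc m}. z t ((\<sigma>(Suc m := v)) t)) * word_weight k r (Suc m) (\<sigma>(Suc m := v))
      = P * z (Suc m) v + 1 / real r * (P * (z (Suc m) v * real (beta_count m \<sigma> v)))"
    if v: "v \<in> {1..k}" for v
    using r by (simp add: word_weight_extend[OF v r] P_def field_simps)
  then have "(\<Sum>v\<in>{1..k}. (\<Prod>t\<in>{1..Suc m}. z t ((\<sigma>(Suc m := v)) t)) * word_weight k r (Suc m) (\<sigma>(Suc m := v)))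
      = P * (\<Sum>v\<in>{1..k}. z (Suc m) v) + 1 / real r * (P * (\<Sum>v\<in>{1..k}. z (Suc m) v * real (beta_count m \<sigma> v)))"
    by (simp add: sum.distrib sum_distrib_left)
  also have "(\<Sum>v\<in>{1..k}. z (Suc m) v * real (beta_count m \<sigma> v)) = (\<Sum>t\<in>{1..m}. z (Suc m) (\<sigma> t))"
    by (rule sum_over_word[OF \<sigma>, symmetric])
  finally show ?thesis by (simp only: sum_distrib_left)
qed

text \<open>The basic recursion: a word of length \<open>m+1\<close> either contributes a fresh last factor, or its
  last letter is merged into an earlier position \<open>t\<close>, whose weight becomes \<open>z t v \<cdot> z (m+1) v\<close>.\<close>
lemma weighted_word_sum_Suc:
  assumes r: "r \<ge> 1"
  shows "weighted_word_sum k r (Suc m) z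
       = (\<Sum>v\<in>{1..k}. z (Suc m) v) * weighted_word_sum k r m z
         + 1 / real r * (\<Sum>t\<in>{1..m}. weighted_word_sum k r m (z(t := (\<lambda>v. z t v * z (Suc m) v))))"
proof -
  define P where "P \<sigma> = (\<Prod>t\<in>{1..m}. z t (\<sigma> t)) * word_weight k r m \<sigma>" for \<sigma>
  have merge: "(\<Sum>\<sigma>\<in>{1..m} \<rightarrow>\<^sub>E {1..k}. P \<sigma> * z (Suc m) (\<sigma> t))
      = weighted_word_sum k r m (z(t := (\<lambda>v. z t v * z (Suc m) v)))" if t: "t \<in> {1..m}" for t
  proof -
    have "(\<Prod>t'\<in>{1..m}. (z(t := (\<lambda>v. z t v * z (Suc m) v))) t' (\<sigma> t'))
        = (\<Prod>t'\<in>{1..m}. z t' (\<sigma> t')) * z (Suc m) (\<sigma> t)" for \<sigma>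
    proof -
      have "(\<Prod>t'\<in>{1..m}. (z(t := (\<lambda>v. z t v * z (Suc m) v))) t' (\<sigma> t'))
          = (\<Prod>t'\<in>{1..m}. z t' (\<sigma> t') * (if t' = t then z (Suc m) (\<sigma> t) else 1))"
        by (intro prod.cong) auto
      then show ?thesis using t by (simp add: prod.distrib prod.delta)
    qed
    then show ?thesis
      unfolding weighted_word_sum_def P_def by (intro sum.cong refl) (simp add: mult_ac)
  qed
  have "weighted_word_sum k r (Suc m) z
      = (\<Sum>\<sigma>\<in>{1..m} \<rightarrow>\<^sub>E {1..k}. \<Sum>v\<in>{1..k}.
           (\<Prod>t\<in>{1..Suc m}. z t ((\<sigma>(Suc m := v)) t)) * word_weight k r (Suc m) (\<sigma>(Suc m := v)))"
    unfolding weighted_word_sum_def by (rule sum_words_Suc) simp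
  also have "\<dots> = (\<Sum>\<sigma>\<in>{1..m} \<rightarrow>\<^sub>E {1..k}. P \<sigma> * (\<Sum>v\<in>{1..k}. z (Suc m) v)
           + 1 / real r * (\<Sum>t\<in>{1..m}. P \<sigma> * z (Suc m) (\<sigma> t)))"
    unfolding P_def by (intro sum.cong refl sum_last_letter[OF _ r])
  also have "\<dots> = (\<Sum>\<sigma>\<in>{1..m} \<rightarrow>\<^sub>E {1..k}. P \<sigma>) * (\<Sum>v\<in>{1..k}. z (Suc m) v)
      + 1 / real r * (\<Sum>\<sigma>\<in>{1..m} \<rightarrow>\<^sub>E {1..k}. \<Sum>t\<in>{1..m}. P \<sigma> * z (Suc m) (\<sigma> t))"
    by (simp only: sum.distrib sum_distrib_right sum_distrib_left[of "1 / real r"])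
  also have "(\<Sum>\<sigma>\<in>{1..m} \<rightarrow>\<^sub>E {1..k}. \<Sum>t\<in>{1..m}. P \<sigma> * z (Suc m) (\<sigma> t))
      = (\<Sum>t\<in>{1..m}. weighted_word_sum k r m (z(t := (\<lambda>v. z t v * z (Suc m) v))))"
    by (subst sum.swap) (rule sum.cong[OF refl merge])
  also have "(\<Sum>\<sigma>\<in>{1..m} \<rightarrow>\<^sub>E {1..k}. P \<sigma>) = weighted_word_sum k r m z"
    unfolding weighted_word_sum_def P_def ..
  finally show ?thesis by (simp only: mult.commute)
qed

section \<open>The majorant\<close>

text \<open>The majorant \<open>V(H,l,h) = \<Sum>\<^sub>m C(l,m) H\<^sup>l\<^sup>-\<^sup>m e(m,h)\<close> will bound weighted word sums with
  \<open>l\<close> positions of weight at most \<open>1/v\<close> ("plain") and \<open>h\<close> positions of weight at most \<open>1/v\<^sup>2\<close>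
  ("squared"), where \<open>H\<close> is the harmonic number.\<close>
definition excess_coeff :: "nat \<Rightarrow> nat \<Rightarrow> real" where
  "excess_coeff m h = (if m = 0 then fact (h+1) else fact (m+h) * (real (m+h) - 1))"

definition word_majorant :: "real \<Rightarrow> nat \<Rightarrow> nat \<Rightarrow> real" where
  "word_majorant H l h = (\<Sum>m\<le>l. real (l choose m) * H^(l-m) * excess_coeff m h)"

text \<open>Pascal's rule applied to a binomially weighted sum.\<close>
lemma binomial_sum_Suc:
  fixes g :: "nat \<Rightarrow> real"
  shows "(\<Sum>m\<le>Suc l. real (Suc l choose m) * H^(Suc l - m) * g m)
       = H * (\<Sum>m\<le>l. real (l choose m) * H^(l-m) * g m) + (\<Sum>m\<le>l. real (l choose m) * H^(l-m) * g (Suc m))"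
proof -
  have "(\<Sum>m\<le>Suc l. real (Suc l choose m) * H^(Suc l - m) * g m)
      = H^(Suc l) * g 0 + (\<Sum>m\<le>l. real (Suc l choose Suc m) * H^(l - m) * g (Suc m))"
    by (subst sum.atMost_Suc_shift) simp
  also have "\<dots> = H^(Suc l) * g 0 + (\<Sum>m\<le>l. real (l choose Suc m) * H^(l - m) * g (Suc m))
                 + (\<Sum>m\<le>l. real (l choose m) * H^(l - m) * g (Suc m))"
    by (simp add: sum.distrib algebra_simps)
  also have "H^(Suc l) * g 0 + (\<Sum>m\<le>l. real (l choose Suc m) * H^(l - m) * g (Suc m))
      = H * (\<Sum>m\<le>l. real (l choose m) * H^(l-m) * g m)"
  proof (cases l)
    case 0
    then show ?thesis by simp
  next
    case (Suc l')
    have "(\<Sum>m\<le>l. real (l choose Suc m) * H^(l - m) * g (Suc m))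
        = (\<Sum>m\<le>l'. real (l choose Suc m) * H^(l - m) * g (Suc m))"
    proof -
      have "real (l choose Suc l) * H^(l - l) * g (Suc l) = 0" by (simp add: binomial_eq_0)
      then show ?thesis using sum.atMost_Suc[of "\<lambda>m. real (l choose Suc m) * H^(l - m) * g (Suc m)" l'] Suc
        by (simp only:)
    qed
    moreover have "(\<Sum>m\<le>l. real (l choose m) * H^(l-m) * g m)
        = H^l * g 0 + (\<Sum>m\<le>l'. real (l choose Suc m) * H^(l' - m) * g (Suc m))"
      unfolding Suc by (subst sum.atMost_Suc_shift) (simp del: binomial_Suc_Suc)
    moreover have "H * (\<Sum>m\<le>l'. real (l choose Suc m) * H^(l' - m) * g (Suc m))
        = (\<Sum>m\<le>l'. real (l choose Suc m) * H^(l - m) * g (Suc m))"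
      unfolding sum_distrib_left
      by (intro sum.cong refl) (simp add: Suc Suc_diff_le power_Suc)
    ultimately show ?thesis by (simp add: algebra_simps power_Suc)
  qed
  finally show ?thesis by simp
qed

lemma word_majorant_Suc:
  "word_majorant H (Suc l) h
     = H * word_majorant H l h + (\<Sum>m\<le>l. real (l choose m) * H^(l-m) * excess_coeff (Suc m) h)"
  unfolding word_majorant_def by (rule binomial_sum_Suc)

text \<open>Absorption \<open>m \<cdot> C(l,m) = l \<cdot> C(l-1,m-1)\<close> applied to a binomially weighted sum.\<close>
lemma binomial_sum_absorb:
  fixes g :: "nat \<Rightarrow> real"
  shows "real l * (\<Sum>j\<le>l-1. real ((l-1) choose j) * H^((l-1)-j) * g j)
       = (\<Sum>m\<le>l. real (l choose m) * H^(l-m) * (real m * g (m-1)))"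
proof (cases l)
  case 0
  then show ?thesis by simp
next
  case (Suc l')
  have "(\<Sum>m\<le>l. real (l choose m) * H^(l-m) * (real m * g (m-1)))
      = (\<Sum>j\<le>l'. real (l choose Suc j) * H^(l'-j) * (real (Suc j) * g j))"
    unfolding Suc by (subst sum.atMost_Suc_shift) simp
  also have "\<dots> = (\<Sum>j\<le>l'. real l * (real (l' choose j) * H^(l'-j) * g j))"
  proof (intro sum.cong refl)
    fix j
    have "real (Suc j) * real (Suc l' choose Suc j) = real (Suc l') * real (l' choose j)"
      using Suc_times_binomial_eq[of l' j] by (metis mult.commute of_nat_mult)
    then have absorb: "real (Suc j) * real (l choose Suc j) = real l * real (l' choose j)"
      using Suc by (simp only:)
    have "real (l choose Suc j) * H^(l'-j) * (real (Suc j) * g j)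
        = (real (Suc j) * real (l choose Suc j)) * (H^(l'-j) * g j)"
      by (simp only: mult_ac)
    also have "\<dots> = (real l * real (l' choose j)) * (H^(l'-j) * g j)" by (simp only: absorb)
    finally show "real (l choose Suc j) * H^(l'-j) * (real (Suc j) * g j)
        = real l * (real (l' choose j) * H^(l'-j) * g j)"
      by (simp only: mult_ac)
  qed
  finally show ?thesis using Suc by (simp add: sum_distrib_left)
qed

lemma word_majorant_absorb:
  "real l * word_majorant H (l-1) (h+1)
     = (\<Sum>m\<le>l. real (l choose m) * H^(l-m) * (real m * excess_coeff (m-1) (h+1)))"
  unfolding word_majorant_def by (rule binomial_sum_absorb)

text \<open>The inequalities between the coefficients behind the two steps of the induction below:
  appending a letter at a plain position, and at a squared position.\<close>
lemma excess_coeff_plain_step: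
  "real h * excess_coeff m h + real m * excess_coeff (m-1) (h+1) \<le> excess_coeff (Suc m) h"
proof -
  consider "m = 0" | "m = 1" | "m \<ge> 2" by linarith
  then show ?thesis
  proof cases
    case 1 then show ?thesis by (simp add: excess_coeff_def)
  next
    case 2
    have next_coeff: "excess_coeff (Suc m) h = fact (h+2) * (real h + 1)" using 2 by (simp add: excess_coeff_def add_ac)
    have coeff: "excess_coeff m h = fact (h+1) * real h" using 2 by (simp add: excess_coeff_def add_ac)
    have shifted_coeff: "excess_coeff (m-1) (h+1) = fact (h+2)" using 2 by (simp add: excess_coeff_def)
    have fact_step: "fact (h+2) = (real h + 2) * (fact (h+1) :: real)" by (simp add: fact_Suc)
    have "real h * (fact (h+1) * real h) + fact (h+2) \<le> fact (h+2) * (real h + 1)"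
      unfolding fact_step by (simp add: algebra_simps)
    then show ?thesis using 2 next_coeff coeff shifted_coeff by simp
  next
    case 3
    define s where "s = m + h"
    have s2: "s \<ge> 2" using 3 by (simp add: s_def)
    have next_coeff: "excess_coeff (Suc m) h = fact (Suc s) * real s" using 3 by (simp add: excess_coeff_def s_def)
    have coeff: "excess_coeff m h = fact s * (real s - 1)" using 3 by (simp add: excess_coeff_def s_def)
    have shifted_coeff: "excess_coeff (m-1) (h+1) = fact s * (real s - 1)" using 3 by (simp add: excess_coeff_def s_def)
    have "real h * (fact s * (real s - 1)) + real m * (fact s * (real s - 1))
         = fact s * (real s * (real s - 1))" by (simp add: s_def algebra_simps)
    also have "\<dots> \<le> fact s * ((real s + 1) * real s)"
      by (intro mult_left_mono) (use s2 in \<open>auto simp: algebra_simps\<close>)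
    also have "\<dots> = fact (Suc s) * real s" by (simp add: fact_Suc algebra_simps)
    finally show ?thesis using next_coeff coeff shifted_coeff by simp
  qed
qed

lemma excess_coeff_squared_step:
  "real (h+2) * excess_coeff m h + real m * excess_coeff (m-1) (h+1) \<le> excess_coeff m (h+1)"
proof -
  consider "m = 0" | "m = 1" | "m \<ge> 2" by linarith
  then show ?thesis
  proof cases
    case 1 then show ?thesis by (simp add: excess_coeff_def fact_Suc algebra_simps)
  next
    case 2
    have next_coeff: "excess_coeff m (h+1) = fact (h+2) * (real h + 1)" using 2 by (simp add: excess_coeff_def add_ac)
    have coeff: "excess_coeff m h = fact (h+1) * real h" using 2 by (simp add: excess_coeff_def add_ac)
    have shifted_coeff: "excess_coeff (m-1) (h+1) = fact (h+2)" using 2 by (simp add: excess_coeff_def)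
    have fact_step: "fact (h+2) = (real h + 2) * (fact (h+1) :: real)" by (simp add: fact_Suc)
    have "(real h + 2) * (fact (h+1) * real h) + fact (h+2) \<le> fact (h+2) * (real h + 1)"
      unfolding fact_step by (simp add: algebra_simps)
    then show ?thesis using 2 next_coeff coeff shifted_coeff by (simp add: add.commute)
  next
    case 3
    define s where "s = m + h"
    have s2: "s \<ge> 2" using 3 by (simp add: s_def)
    have next_coeff: "excess_coeff m (h+1) = fact (Suc s) * real s" using 3 by (simp add: excess_coeff_def s_def)
    have coeff: "excess_coeff m h = fact s * (real s - 1)" using 3 by (simp add: excess_coeff_def s_def)
    have shifted_coeff: "excess_coeff (m-1) (h+1) = fact s * (real s - 1)" using 3 by (simp add: excess_coeff_def s_def)
    have "real (h+2) * (fact s * (real s - 1)) + real m * (fact s * (real s - 1))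
         = fact s * ((real s + 2) * (real s - 1))" by (simp add: s_def algebra_simps)
    also have "\<dots> \<le> fact s * ((real s + 1) * real s)"
      by (intro mult_left_mono) (use s2 in \<open>auto simp: algebra_simps\<close>)
    also have "\<dots> = fact (Suc s) * real s" by (simp add: fact_Suc algebra_simps)
    finally show ?thesis using next_coeff coeff shifted_coeff by simp
  qed
qed

lemma word_majorant_plain_step:
  assumes "H \<ge> 0"
  shows "(H + real h) * word_majorant H l h + real l * word_majorant H (l-1) (h+1)
         \<le> word_majorant H (Suc l) h"
proof -
  have "real h * word_majorant H l h + real l * word_majorant H (l-1) (h+1)
      = (\<Sum>m\<le>l. real (l choose m) * H^(l-m) * (real h * excess_coeff m h + real m * excess_coeff (m-1) (h+1)))"
    unfolding word_majorant_absorb by (simp add: word_majorant_def sum_distrib_left sum.distrib algebra_simps)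
  also have "\<dots> \<le> (\<Sum>m\<le>l. real (l choose m) * H^(l-m) * excess_coeff (Suc m) h)"
    using assms by (intro sum_mono mult_left_mono excess_coeff_plain_step) auto
  finally show ?thesis unfolding word_majorant_Suc by (simp add: algebra_simps)
qed

lemma word_majorant_squared_step:
  assumes "H \<ge> 0"
  shows "real (h+2) * word_majorant H l h + real l * word_majorant H (l-1) (h+1)
         \<le> word_majorant H l (h+1)"
proof -
  have "real (h+2) * word_majorant H l h + real l * word_majorant H (l-1) (h+1)
      = (\<Sum>m\<le>l. real (l choose m) * H^(l-m) * (real (h+2) * excess_coeff m h + real m * excess_coeff (m-1) (h+1)))"
    unfolding word_majorant_absorb by (simp add: word_majorant_def sum_distrib_left sum.distrib algebra_simps)
  also have "\<dots> \<le> (\<Sum>m\<le>l. real (l choose m) * H^(l-m) * excess_coeff m (h+1))"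
    using assms by (intro sum_mono mult_left_mono excess_coeff_squared_step) auto
  finally show ?thesis unfolding word_majorant_def .
qed

definition dominated_weights :: "nat \<Rightarrow> nat \<Rightarrow> nat set \<Rightarrow> (nat \<Rightarrow> nat \<Rightarrow> real) \<Rightarrow> bool" where
  "dominated_weights k m S z \<longleftrightarrow> S \<subseteq> {1..m}
     \<and> (\<forall>t\<in>{1..m}. \<forall>v\<in>{1..k}. 0 \<le> z t v \<and> z t v \<le> 1 / real v)
     \<and> (\<forall>t\<in>S. \<forall>v\<in>{1..k}. z t v \<le> (1 / real v)^2)"

lemma sum_inverse_squares_le: "k \<ge> 1 \<Longrightarrow> (\<Sum>v\<in>{1..k}. (1 / real v)^2) \<le> 2 - 1 / real k"
proof (induction k rule: dec_induct)
  case base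
  then show ?case by simp
next
  case (step k)
  define a b where "a = real k" and "b = real k + 1"
  have ab: "a > 0" "b > 0" using step.hyps by (simp_all add: a_def b_def)
  have "1 / a - (1 / b + (1 / b)^2) = 1 / (a * b^2)"
    using ab by (simp add: field_simps power2_eq_square) (simp add: a_def b_def algebra_simps)
  moreover have "0 \<le> 1 / (a * b^2)" using ab by simp
  ultimately have "1 / b + (1 / b)^2 \<le> 1 / a"
    by linarith
  then show ?case
    using step.IH by (simp add: a_def b_def add.commute)
qed

lemma sum_inverse_squares_le_2: "(\<Sum>v\<in>{1..k}. (1 / real v)^2) \<le> 2"
  using sum_inverse_squares_le[of k] by (cases "k = 0") (auto intro: order.trans)

lemma weighted_word_sum_nonneg:
  assumes "r \<ge> 1" "\<forall>t\<in>{1..m}. \<forall>v\<in>{1..k}. 0 \<le> z t v"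
  shows "weighted_word_sum k r m z \<ge> 0"
  unfolding weighted_word_sum_def using assms
  by (intro sum_nonneg mult_nonneg_nonneg prod_nonneg order.trans[OF zero_le_one word_weight_ge_1])
     (auto simp: PiE_def Pi_def)

lemma weighted_word_sum_0 [simp]: "weighted_word_sum k r 0 z = 1"
  by (simp add: weighted_word_sum_def word_weight_def beta_count_def)

lemma dominated_weights_restrict:
  "dominated_weights k (Suc m) S z \<Longrightarrow> dominated_weights k m (S - {Suc m}) z"
  by (auto simp: dominated_weights_def)

lemma dominated_weights_merge:
  assumes "dominated_weights k (Suc m) S z" "t \<in> {1..m}"
  shows "dominated_weights k m (insert t (S - {Suc m})) (z(t := (\<lambda>v. z t v * z (Suc m) v)))"
proof -
  have "0 \<le> z t v * z (Suc m) v \<and> z t v * z (Suc m) v \<le> (1 / real v)^2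
        \<and> z t v * z (Suc m) v \<le> 1 / real v" if v: "v \<in> {1..k}" for v
  proof -
    have "0 \<le> z t v" "z t v \<le> 1 / real v" "0 \<le> z (Suc m) v" "z (Suc m) v \<le> 1 / real v"
      using assms v by (auto simp: dominated_weights_def)
    moreover have "(1 / real v)^2 \<le> 1 / real v"
      using v by (simp add: power2_eq_square field_simps)
    moreover have "z t v * z (Suc m) v \<le> 1 / real v * (1 / real v)"
      using calculation by (intro mult_mono) auto
    ultimately show ?thesis
      by (auto simp: power2_eq_square)
  qed
  then show ?thesis using assms by (auto simp: dominated_weights_def)
qed

lemma sum_card_insert:
  assumes "S \<subseteq> {1..m}"
  shows "(\<Sum>t\<in>{1..m}. f (card (insert t S)))
       = real (card S) * f (card S) + real (m - card S) * f (card S + 1)"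
proof -
  have fin: "finite S" using assms finite_subset by blast
  have "(\<Sum>t\<in>{1..m}. f (card (insert t S)))
      = (\<Sum>t\<in>S. f (card (insert t S))) + (\<Sum>t\<in>{1..m} - S. f (card (insert t S)))"
    using assms by (subst sum.subset_diff[of S]) (auto simp: add.commute)
  also have "\<dots> = (\<Sum>t\<in>S. f (card S)) + (\<Sum>t\<in>{1..m} - S. f (card S + 1))"
    using fin by (intro arg_cong2[where f = "(+)"] sum.cong refl) (auto simp: insert_absorb)
  finally show ?thesis
    using assms fin by (simp add: card_Diff_subset)
qed

lemma merged_words_bound:
  assumes r: "r \<ge> 1" and dom: "dominated_weights k (Suc m) S z"
    and IH: "\<And>S z. dominated_weights k m S z
               \<Longrightarrow> weighted_word_sum k r m z \<le> word_majorant (harm k) (m - card S) (card S)"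
  defines "h \<equiv> card (S - {Suc m})"
  shows "1 / real r * (\<Sum>t\<in>{1..m}. weighted_word_sum k r m (z(t := (\<lambda>v. z t v * z (Suc m) v))))
       \<le> real h * word_majorant (harm k) (m - h) h
         + real (m - h) * word_majorant (harm k) (m - h - 1) (h + 1)"
proof -
  define zt where "zt t = z(t := (\<lambda>v. z t v * z (Suc m) v))" for t
  have dom_zt: "dominated_weights k m (insert t (S - {Suc m})) (zt t)" if "t \<in> {1..m}" for t
    unfolding zt_def by (rule dominated_weights_merge[OF dom that])
  have S': "S - {Suc m} \<subseteq> {1..m}"
    using dom by (auto simp: dominated_weights_def)
  have "1 / real r * (\<Sum>t\<in>{1..m}. weighted_word_sum k r m (zt t))
      \<le> (\<Sum>t\<in>{1..m}. weighted_word_sum k r m (zt t))"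
    using r dom_zt by (intro mult_left_le_one_le sum_nonneg weighted_word_sum_nonneg)
                     (auto simp: dominated_weights_def)
  also have "\<dots> \<le> (\<Sum>t\<in>{1..m}. word_majorant (harm k) (m - card (insert t (S - {Suc m})))
                                  (card (insert t (S - {Suc m}))))"
    using IH[OF dom_zt] by (intro sum_mono) auto
  also have "\<dots> = real h * word_majorant (harm k) (m - h) h
                 + real (m - h) * word_majorant (harm k) (m - h - 1) (h + 1)"
    unfolding sum_card_insert[OF S', of "\<lambda>c. word_majorant (harm k) (m - c) c"] h_def by simp
  finally show ?thesis unfolding zt_def .
qed

text \<open>The key estimate, by induction on the length: the recursion splits a word sum into a
  fresh last letter (contributing at most \<open>H\<close>, or at most \<open>\<Sum> 1/v\<^sup>2 \<le> 2\<close> at a squared position)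
  and the merged words; the step inequalities of the majorant absorb both.\<close>
lemma weighted_word_sum_bound:
  assumes r: "r \<ge> 1" and "dominated_weights k m S z"
  shows "weighted_word_sum k r m z \<le> word_majorant (harm k) (m - card S) (card S)"
  using assms(2)
proof (induction m arbitrary: S z)
  case 0
  then show ?case by (simp add: dominated_weights_def word_majorant_def excess_coeff_def)
next
  case (Suc m)
  define H where "H = (harm k :: real)"
  have H: "H \<ge> 0" unfolding H_def by (rule harm_nonneg)
  define h where "h = card (S - {Suc m})"
  have dom: "dominated_weights k m (S - {Suc m}) z"
    by (rule dominated_weights_restrict[OF Suc.prems])
  have hm: "h \<le> m"
    using dom by (auto simp: dominated_weights_def h_def card_mono[of "{1..m}", simplified])
  have z_last: "\<forall>v\<in>{1..k}. 0 \<le> z (Suc m) v \<and> z (Suc m) v \<le> 1 / real v"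
    using Suc.prems by (auto simp: dominated_weights_def)
  have IH: "weighted_word_sum k r m z \<le> word_majorant H (m - h) h"
    using Suc.IH[OF dom] unfolding H_def h_def .
  have nonneg: "weighted_word_sum k r m z \<ge> 0"
    using dom r by (intro weighted_word_sum_nonneg) (auto simp: dominated_weights_def)
  have split: "weighted_word_sum k r (Suc m) z
      \<le> (\<Sum>v\<in>{1..k}. z (Suc m) v) * weighted_word_sum k r m z
        + (real h * word_majorant H (m - h) h + real (m - h) * word_majorant H (m - h - 1) (h + 1))"
    using weighted_word_sum_Suc[OF r, of k m z] merged_words_bound[OF r Suc.prems Suc.IH]
    unfolding H_def h_def by linarith
  show ?case
  proof (cases "Suc m \<in> S")
    case False
    then have S: "S - {Suc m} = S" by auto
    have "(\<Sum>v\<in>{1..k}. z (Suc m) v) \<le> H"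
      unfolding H_def harm_eq using z_last by (intro sum_mono) auto
    then have "(\<Sum>v\<in>{1..k}. z (Suc m) v) * weighted_word_sum k r m z \<le> H * word_majorant H (m - h) h"
      using IH nonneg H z_last by (intro mult_mono) (auto intro: sum_nonneg)
    with split have "weighted_word_sum k r (Suc m) z
        \<le> (H + real h) * word_majorant H (m - h) h + real (m - h) * word_majorant H (m - h - 1) (h + 1)"
      by (simp add: algebra_simps)
    also have "\<dots> \<le> word_majorant H (Suc (m - h)) h"
      using word_majorant_plain_step[OF H, of h "m - h"] by simp
    finally show ?thesis
      using S hm by (simp add: H_def h_def Suc_diff_le)
  next
    case True
    have "finite S"
      using Suc.prems finite_subset by (auto simp: dominated_weights_def)
    then have card_S: "card S = h + 1"
      using card_Suc_Diff1[OF _ True] by (simp add: h_def)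
    have "(\<Sum>v\<in>{1..k}. z (Suc m) v) \<le> (\<Sum>v\<in>{1..k}. (1 / real v)^2)"
      using Suc.prems True by (intro sum_mono) (auto simp: dominated_weights_def)
    also have "\<dots> \<le> 2" by (rule sum_inverse_squares_le_2)
    finally have "(\<Sum>v\<in>{1..k}. z (Suc m) v) * weighted_word_sum k r m z \<le> 2 * word_majorant H (m - h) h"
      using IH nonneg z_last by (intro mult_mono) (auto intro: sum_nonneg)
    with split have "weighted_word_sum k r (Suc m) z
        \<le> real (h + 2) * word_majorant H (m - h) h + real (m - h) * word_majorant H (m - h - 1) (h + 1)"
      by (simp add: algebra_simps)
    also have "\<dots> \<le> word_majorant H (m - h) (h + 1)"
      by (rule word_majorant_squared_step[OF H])
    finally show ?thesis
      using card_S by (simp add: H_def)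
  qed
qed

lemma three_mul_le_two_pow: "m \<ge> 2 \<Longrightarrow> 3 * (real m - 1) \<le> 2 ^ m"
proof (induction m rule: dec_induct)
  case base
  then show ?case by simp
next
  case (step m)
  have "(2::real) ^ 2 \<le> 2 ^ m" using step.hyps by (intro power_increasing) auto
  then show ?case using step.IH by simp
qed

text \<open>The majorant with no squared positions, compared with its leading term \<open>H\<^sup>n\<close>:
  this is where the constant of part (b) comes from.\<close>
lemma word_majorant_le_upper:
  assumes H: "H > 0"
  shows "word_majorant H n 0 \<le> (1 + 1/3 * (\<Sum>m\<in>{2..n}. 2 ^ m * fact n / fact (n - m) / H ^ m)) * H ^ n"
proof -
  define f where "f m = real (n choose m) * H^(n-m) * excess_coeff m 0" for m
  text \<open>The linear term vanishes, since \<open>e(1,0) = 0\<close>.\<close>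
  have "{..n} = {0} \<union> {1} \<inter> {..n} \<union> {2..n}" by auto
  then have "word_majorant H n 0 = f 0 + (\<Sum>m\<in>{2..n}. f m)"
    unfolding word_majorant_def f_def[symmetric]
    by (cases "n = 0") (simp_all add: sum.union_disjoint f_def excess_coeff_def)
  also have "f 0 = H ^ n" by (simp add: f_def excess_coeff_def)
  also have "(\<Sum>m\<in>{2..n}. f m) \<le> (\<Sum>m\<in>{2..n}. 1/3 * (2 ^ m * fact n / fact (n - m) / H ^ m) * H ^ n)"
  proof (intro sum_mono)
    fix m assume "m \<in> {2..n}"
    then have mn: "m \<le> n" and m2: "m \<ge> 2" by auto
    have "real (n choose m) * fact m = fact n / fact (n - m)"
      using binomial_fact[OF mn, where 'a=real] by (simp add: field_simps)
    moreover have "f m = (real (n choose m) * fact m) * H^(n-m) * (real m - 1)"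
      using m2 by (simp add: f_def excess_coeff_def)
    ultimately have "f m = fact n / fact (n - m) * H^(n-m) * (real m - 1)"
      by simp
    also have "\<dots> \<le> fact n / fact (n - m) * H^(n-m) * (1/3 * 2 ^ m)"
      using three_mul_le_two_pow[OF m2] H by (intro mult_left_mono) auto
    also have "\<dots> = 1/3 * (2 ^ m * fact n / fact (n - m) / H ^ m) * H ^ n"
      using H mn by (simp add: power_diff field_simps)
    finally show "f m \<le> 1/3 * (2 ^ m * fact n / fact (n - m) / H ^ m) * H ^ n" .
  qed
  finally show ?thesis
    by (simp add: distrib_right sum_distrib_left sum_distrib_right mult.assoc)
qed

theorem I_krn_ratio_bounds:
  fixes k r n :: nat
  assumes k: "k \<ge> 1" and r: "r \<ge> 1"
  defines "Q \<equiv> I_krn k r n / (main_factor k r n * harm k ^ n)"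
  shows "1 \<le> Q" and "Q \<le> upper_bound k n"
proof -
  define R where "R = main_factor k r n"
  define H where "H = (harm k :: real)"
  define A where "A = weighted_word_sum k r n (\<lambda>_ v. 1 / real v)"
  have H: "H > 0" unfolding H_def using k by simp
  have R: "R > 0"
    unfolding R_def using k r by (rule main_factor_pos)
  have "I_krn k r n = (\<Sum>\<sigma>\<in>{1..n} \<rightarrow>\<^sub>E {1..k}. R * ((\<Prod>t\<in>{1..n}. 1 / real (\<sigma> t)) * word_weight k r n \<sigma>))"
    unfolding I_krn_word_sum[OF k r] R_def by (intro sum.cong refl word_term_factorization[OF k r])
  then have "I_krn k r n = R * A"
    by (simp add: A_def weighted_word_sum_def sum_distrib_left)
  moreover have "Q = I_krn k r n / (R * H ^ n)"
    unfolding Q_def R_def H_def ..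
  ultimately have Q: "Q = A / H ^ n"
    using R by simp
  have "H ^ n \<le> A"
    unfolding H_def harm_power_word_sum A_def weighted_word_sum_def
  proof (intro sum_mono)
    fix \<sigma> :: "nat \<Rightarrow> nat"
    have "0 \<le> (\<Prod>t\<in>{1..n}. 1 / real (\<sigma> t))" by (intro prod_nonneg) auto
    then show "(\<Prod>t\<in>{1..n}. 1 / real (\<sigma> t)) \<le> (\<Prod>t\<in>{1..n}. 1 / real (\<sigma> t)) * word_weight k r n \<sigma>"
      using word_weight_ge_1[OF r] by (simp add: mult_le_cancel_left1)
  qed
  then show "1 \<le> Q" using Q H by simp
  have "dominated_weights k n {} (\<lambda>_ v. 1 / real v)"
    by (simp add: dominated_weights_def)
  then have "A \<le> word_majorant H n 0"
    using weighted_word_sum_bound[OF r] unfolding A_def H_def by fastforce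
  also have "\<dots> \<le> upper_bound k n * H ^ n"
    using word_majorant_le_upper[OF H, of n] by (simp add: upper_bound_def H_def)
  finally show "Q \<le> upper_bound k n" using Q H by (simp add: divide_le_eq)
qed

section \<open>Part (c): asymptotics\<close>

lemma one_le_ln: "k \<ge> 4 \<Longrightarrow> 1 \<le> ln (real k)"
proof -
  assume k: "k \<ge> 4"
  have "1 \<le> 2 * ln (2::real)" using ln2_ge_two_thirds by simp
  also have "\<dots> = ln 4" using ln_mult[of 2 2] by simp
  also have "\<dots> \<le> ln (real k)" using k by simp
  finally show ?thesis .
qed

lemma ln_le_harm: "ln (real k) \<le> (harm k :: real)"
proof (cases "k = 0")
  case False
  then have "ln (real k) \<le> ln (real k + 1)" by simp
  also have "\<dots> \<le> harm k" by (rule harm_ge_ln)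
  finally show ?thesis .
qed (simp add: harm_def)

lemma harm_le_ln_plus_1: "k \<ge> 1 \<Longrightarrow> harm k \<le> ln (real k) + (1::real)"
  using euler_mascheroni_sequence_decreasing[of 1 k] by (simp add: harm_def)

lemma harm_le_two_ln:
  assumes "k \<ge> 4"
  shows "0 < (harm k :: real)" "harm k \<le> 2 * ln (real k)"
proof -
  have "1 \<le> ln (real k)" using one_le_ln[OF assms] .
  moreover have "harm k \<le> ln (real k) + (1::real)" using assms by (intro harm_le_ln_plus_1) simp
  moreover have "ln (real k) \<le> (harm k :: real)" by (rule ln_le_harm)
  ultimately show "0 < (harm k :: real)" "harm k \<le> 2 * ln (real k)" by linarith+
qed

lemma euler_mascheroni_le_1: "euler_mascheroni \<le> (1::real)"
  using euler_mascheroni_bounds[of 1] ln2_ge_two_thirds by (simp add: harm_def)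

lemma harm_minus_ln_euler:
  assumes k: "k \<ge> 1"
  shows "\<bar>harm k - (ln (real k) + euler_mascheroni)\<bar> \<le> 1 / real k"
proof -
  define t where "t = (harm k - ln (real (Suc k)) :: real)"
  have \<gamma>: "t \<le> euler_mascheroni" "euler_mascheroni \<le> t + 1 / (2 * real k)"
    using euler_mascheroni_bounds[OF k] unfolding t_def[symmetric]
    by (auto simp: inverse_eq_divide intro: order.trans[rotated])
  have "0 \<le> ln (real (Suc k)) - ln (real k)" using k by simp
  moreover have "ln (real (Suc k)) - ln (real k) \<le> 1 / real k"
    using ln_diff_le_inverse[of "real k"] k by (simp add: add.commute)
  moreover have "harm k - (ln (real k) + euler_mascheroni)
      = (t - euler_mascheroni) + (ln (real (Suc k)) - ln (real k))"
    unfolding t_def by simp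
  moreover have "1 / (2 * real k) \<le> 1 / real k" using k by (simp add: field_simps)
  ultimately show ?thesis using \<gamma> by (simp add: abs_le_iff)
qed

lemma ln_squared_le: "k \<ge> 1 \<Longrightarrow> (ln (real k))^2 \<le> 4 * real k"
proof -
  assume k: "k \<ge> 1"
  define s where "s = sqrt (real k)"
  have s: "s > 0" using k by (simp add: s_def)
  have "ln (real k) = 2 * ln s" using k by (simp add: s_def ln_sqrt)
  moreover have "ln s \<le> s - 1" using s by (rule ln_le_minus_one)
  moreover have "0 \<le> ln (real k)" using k by simp
  ultimately have "(ln (real k))^2 \<le> (2 * s)^2" by (intro power_mono) auto
  also have "\<dots> = 4 * real k" using k by (simp add: s_def power_mult_distrib)
  finally show ?thesis .
qed

lemma power_diff_le:
  fixes a b :: real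
  assumes "0 \<le> b" "b \<le> a"
  shows "a ^ n - b ^ n \<le> real n * (a - b) * a ^ (n - 1)"
proof (induction n)
  case (Suc n)
  have "a ^ Suc n - b ^ Suc n = a * (a ^ n - b ^ n) + b ^ n * (a - b)" by (simp add: algebra_simps)
  also have "\<dots> \<le> a * (real n * (a - b) * a ^ (n - 1)) + a ^ n * (a - b)"
    using assms Suc.IH by (intro add_mono mult_left_mono mult_right_mono power_mono) auto
  also have "\<dots> = real (Suc n) * (a - b) * a ^ n"
    by (cases n) (simp_all add: algebra_simps)
  finally show ?case by simp
qed simp

lemma power_diff_abs_le:
  fixes a b M :: real
  assumes "0 \<le> a" "0 \<le> b" "a \<le> M" "b \<le> M"
  shows "\<bar>a ^ n - b ^ n\<bar> \<le> real n * \<bar>a - b\<bar> * M ^ (n - 1)"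
proof -
  have "\<bar>a ^ n - b ^ n\<bar> \<le> real n * \<bar>a - b\<bar> * max a b ^ (n - 1)"
    using power_diff_le[of b a n] power_diff_le[of a b n] power_mono[of b a n] power_mono[of a b n] assms
    by (cases "b \<le> a") (auto simp: abs_minus_commute max_def)
  also have "\<dots> \<le> real n * \<bar>a - b\<bar> * M ^ (n - 1)"
    using assms by (intro mult_left_mono power_mono) auto
  finally show ?thesis .
qed

lemma upper_bound_minus_1_le:
  assumes k: "k \<ge> 4"
  shows "0 \<le> upper_bound k n - 1"
    and "upper_bound k n - 1 \<le> (1/3 * (\<Sum>m\<in>{2..n}. 2 ^ m * fact n / fact (n - m))) / (ln (real k))^2"
proof -
  define L where "L = ln (real k)"
  define H where "H = (harm k :: real)"
  define T where "T m = (2 ^ m * fact n / fact (n - m) :: real)" for m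
  have L: "1 \<le> L" unfolding L_def using one_le_ln[OF k] .
  have LH: "L \<le> H" unfolding L_def H_def by (rule ln_le_harm)
  have ub: "upper_bound k n - 1 = 1/3 * (\<Sum>m\<in>{2..n}. T m / H ^ m)"
    by (simp add: upper_bound_def H_def T_def)
  show "0 \<le> upper_bound k n - 1"
    unfolding ub using L LH by (intro mult_nonneg_nonneg sum_nonneg) (auto simp: T_def)
  have "T m / H ^ m \<le> T m / L ^ 2" if "m \<in> {2..n}" for m
  proof -
    have "L ^ 2 \<le> H ^ 2" using L LH by (intro power_mono) auto
    also have "\<dots> \<le> H ^ m" using that L LH by (intro power_increasing) auto
    moreover have "0 < H ^ m * L ^ 2" using L LH by simp
    ultimately show ?thesis by (intro divide_left_mono) (auto simp: T_def)
  qed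
  then have "(\<Sum>m\<in>{2..n}. T m / H ^ m) \<le> (\<Sum>m\<in>{2..n}. T m) / L ^ 2"
    unfolding sum_divide_distrib by (rule sum_mono)
  then show "upper_bound k n - 1 \<le> (1/3 * (\<Sum>m\<in>{2..n}. 2 ^ m * fact n / fact (n - m))) / (ln (real k))^2"
    unfolding ub T_def L_def by simp
qed

lemma inverse_power_diff_le:
  fixes b d :: real
  assumes b: "b > 0" and d: "d \<ge> 0"
  shows "1 / b ^ n - 1 / (b + d) ^ n \<le> real n * d / b ^ (n + 1)"
proof (cases n)
  case (Suc n')
  define a where "a = b + d"
  have a: "a > 0" "b \<le> a" using b d by (auto simp: a_def)
  have "1 / b ^ n - 1 / a ^ n = (a ^ n - b ^ n) / (a ^ n * b ^ n)"
    using a b by (simp add: field_simps)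
  also have "\<dots> \<le> (real n * d * a ^ n') / (a ^ n * b ^ n)"
    using power_diff_le[of b a n] a b Suc by (intro divide_right_mono) (auto simp: a_def)
  also have "\<dots> = real n * d / (a * b ^ n)"
    using a b by (simp add: Suc field_simps)
  also have "\<dots> \<le> real n * d / (b * b ^ n)"
    using a b d by (intro divide_left_mono mult_right_mono) auto
  finally show ?thesis by (simp add: a_def)
qed simp

lemma main_factor_bounds:
  fixes k r n :: nat
  assumes k: "k \<ge> 1" and r: "r \<ge> 1"
  shows "main_factor k r n \<le> 1 / real k ^ n"
    and "1 / real k ^ n - main_factor k r n \<le> real n ^ 2 / real k ^ (n + 1)"
proof -
  define P where "P = (\<Prod>j\<in>{0..<n}. real (k*r + j))"
  have kr: "real k * real r \<ge> 1"
    using mult_mono[of 1 "real k" 1 "real r"] k r by simp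
  have "(real k * real r) ^ n = (\<Prod>j\<in>{0..<n}. real k * real r)" by simp
  also have "\<dots> \<le> P" unfolding P_def using kr by (intro prod_mono) auto
  finally have P_lower: "(real k * real r) ^ n \<le> P" .
  have factor_le: "real (k*r + j) \<le> real r * (real k + real n)" if "j < n" for j
  proof -
    have "j \<le> n * r" using that r by (metis less_imp_le_nat mult.right_neutral mult_le_mono2 order_trans)
    then have "k*r + j \<le> k*r + n*r" by (rule add_left_mono)
    also have "\<dots> = r * (k + n)" by (simp add: algebra_simps)
    finally have "k*r + j \<le> r * (k + n)" .
    then have "real (k*r + j) \<le> real (r * (k + n))" by (rule of_nat_mono)
    then show ?thesis by simp
  qed
  have P_upper: "P \<le> (real r * (real k + real n)) ^ n"
  proof -
    have "P \<le> (\<Prod>j\<in>{0..<n}. real r * (real k + real n))"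
      unfolding P_def using factor_le by (intro prod_mono) auto
    then show ?thesis by simp
  qed
  have pos: "0 < (real k * real r) ^ n" using kr by simp
  have "main_factor k r n \<le> real r ^ n / (real k * real r) ^ n"
    unfolding main_factor_def P_def[symmetric] using P_lower pos by (intro divide_left_mono) auto
  also have "\<dots> = 1 / real k ^ n" using r k by (simp add: power_mult_distrib)
  finally show "main_factor k r n \<le> 1 / real k ^ n" .
  have "1 / (real k + real n) ^ n = real r ^ n / (real r * (real k + real n)) ^ n"
    using r by (simp add: power_mult_distrib)
  also have "\<dots> \<le> main_factor k r n"
    unfolding main_factor_def P_def[symmetric] using P_upper pos P_lower by (intro divide_left_mono) auto
  finally have "1 / real k ^ n - main_factor k r n \<le> 1 / real k ^ n - 1 / (real k + real n) ^ n" by simp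
  also have "\<dots> \<le> real n * real n / real k ^ (n + 1)"
    using k by (intro inverse_power_diff_le) auto
  finally show "1 / real k ^ n - main_factor k r n \<le> real n ^ 2 / real k ^ (n + 1)"
    by (simp add: power2_eq_square)
qed

lemma upper_bound_bigo: "(\<lambda>k. upper_bound k n - 1) \<in> O(\<lambda>k. ln (real k) powr (-2))"
proof (rule bigoI[where c = "1/3 * (\<Sum>m\<in>{2..n}. 2 ^ m * fact n / fact (n - m))"])
  show "\<forall>\<^sub>F k in at_top. norm (upper_bound k n - 1)
          \<le> 1/3 * (\<Sum>m\<in>{2..n}. 2 ^ m * fact n / fact (n - m)) * norm (ln (real k) powr (-2))"
    using eventually_ge_at_top[of 4]
  proof eventually_elim
    case (elim k)
    then have "0 < ln (real k)" using one_le_ln[of k] by linarith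
    then show ?case
      using upper_bound_minus_1_le[OF elim, of n] by (simp add: powr_minus_divide powr_realpow)
  qed
qed

lemma bigo_log_scale:
  fixes f :: "nat \<Rightarrow> real"
  assumes "\<And>k. k \<ge> 4 \<Longrightarrow> \<bar>f k\<bar> \<le> c * (ln (real k) ^ n / ln (real k) ^ 2 / real k ^ n)"
  shows "f \<in> O(\<lambda>k. ln (real k) powr (real n - 2) / real k ^ n)"
proof (rule bigoI[where c = c])
  show "\<forall>\<^sub>F k in at_top. norm (f k) \<le> c * norm (ln (real k) powr (real n - 2) / real k ^ n)"
    using eventually_ge_at_top[of 4]
  proof eventually_elim
    case (elim k)
    then have "0 < ln (real k)" using one_le_ln[of k] by linarith
    then show ?case using assms[OF elim] by (simp add: powr_diff powr_realpow)
  qed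
qed

lemma I_krn_minus_main_term_le:
  assumes k: "k \<ge> 4" and r: "r \<ge> 1"
  defines "L \<equiv> ln (real k)"
  shows "\<bar>I_krn k r n - main_factor k r n * harm k ^ n\<bar>
       \<le> (1/3 * (\<Sum>m\<in>{2..n}. 2 ^ m * fact n / fact (n - m))) * 2 ^ n * (L ^ n / L ^ 2 / real k ^ n)"
proof -
  define C where "C = 1/3 * (\<Sum>m\<in>{2..n}. 2 ^ m * fact n / fact (n - m) :: real)"
  define D where "D = main_factor k r n * harm k ^ n"
  define Q where "Q = I_krn k r n / D"
  have L: "1 \<le> L" unfolding L_def using one_le_ln[OF k] .
  have H: "0 < (harm k :: real)" "(harm k :: real) \<le> 2 * L"
    unfolding L_def by (rule harm_le_two_ln[OF k])+
  have D: "D > 0" unfolding D_def using k r main_factor_pos[of k r n] by simp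
  have Q: "1 \<le> Q" "Q - 1 \<le> C / L ^ 2"
    using I_krn_ratio_bounds[of k r n] upper_bound_minus_1_le(2)[OF k, of n] k r
    unfolding Q_def D_def C_def L_def by auto
  have "\<bar>I_krn k r n - D\<bar> = (Q - 1) * D" using D Q by (simp add: Q_def algebra_simps)
  also have "\<dots> \<le> C / L ^ 2 * (1 / real k ^ n * (2 * L) ^ n)"
    using Q D H main_factor_bounds(1)[of k r n] k r less_imp_le[OF H(1)] unfolding D_def C_def
    by (intro mult_mono power_mono) (auto intro: sum_nonneg)
  also have "\<dots> = C * 2 ^ n * (L ^ n / L ^ 2 / real k ^ n)"
    by (simp add: power_mult_distrib)
  finally show ?thesis unfolding D_def C_def .
qed

lemma main_term_minus_harm_le:
  assumes k: "k \<ge> 4" and r: "r \<ge> 1"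
  defines "L \<equiv> ln (real k)"
  shows "\<bar>main_factor k r n * harm k ^ n - harm k ^ n / real k ^ n\<bar>
       \<le> 4 * real n ^ 2 * 2 ^ n * (L ^ n / L ^ 2 / real k ^ n)"
proof -
  define H where "H = (harm k :: real)"
  have L: "1 \<le> L" unfolding L_def using one_le_ln[OF k] .
  have H: "0 < H" "H \<le> 2 * L"
    unfolding L_def H_def by (rule harm_le_two_ln[OF k])+
  have kL: "1 / real k \<le> 4 / L ^ 2"
    using ln_squared_le[of k] k L unfolding L_def by (simp add: field_simps)
  have "H ^ n * main_factor k r n \<le> H ^ n * (1 / real k ^ n)"
    using main_factor_bounds(1)[of k r n] k r H by (intro mult_left_mono) auto
  then have "\<bar>main_factor k r n * H ^ n - H ^ n / real k ^ n\<bar> = H ^ n * (1 / real k ^ n - main_factor k r n)"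
    by (simp add: algebra_simps)
  also have "\<dots> \<le> (2 * L) ^ n * (real n ^ 2 / real k ^ (n + 1))"
    using main_factor_bounds[of k r n] k r H by (intro mult_mono power_mono) auto
  also have "\<dots> = (2 * L) ^ n * (real n ^ 2 / real k ^ n * (1 / real k))"
    by simp
  also have "\<dots> \<le> (2 * L) ^ n * (real n ^ 2 / real k ^ n * (4 / L ^ 2))"
    using kL L by (intro mult_left_mono) auto
  also have "\<dots> = 4 * real n ^ 2 * 2 ^ n * (L ^ n / L ^ 2 / real k ^ n)"
    by (simp add: power_mult_distrib field_simps)
  finally show ?thesis unfolding H_def .
qed

lemma harm_power_minus_log_le:
  assumes k: "k \<ge> 4"
  defines "L \<equiv> ln (real k)"
  shows "\<bar>harm k ^ n / real k ^ n - (L + euler_mascheroni) ^ n / real k ^ n\<bar>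
       \<le> 4 * real n * 2 ^ n * (L ^ n / L ^ 2 / real k ^ n)"
proof -
  define H G where "H = (harm k :: real)" and "G = L + euler_mascheroni"
  have L: "1 \<le> L" unfolding L_def using one_le_ln[OF k] .
  have H: "0 < H" "H \<le> 2 * L"
    unfolding L_def H_def by (rule harm_le_two_ln[OF k])+
  have G: "0 \<le> G" "G \<le> 2 * L"
    using L euler_mascheroni_pos euler_mascheroni_le_1 unfolding G_def by auto
  have kL: "1 / real k \<le> 4 / L ^ 2"
    using ln_squared_le[of k] k L unfolding L_def by (simp add: field_simps)
  have "\<bar>H ^ n - G ^ n\<bar> \<le> real n * \<bar>H - G\<bar> * (2 * L) ^ (n - 1)"
    using H G by (intro power_diff_abs_le) auto
  also have "\<dots> \<le> real n * (4 / L ^ 2) * (2 * L) ^ n"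
    using harm_minus_ln_euler[of k] k kL L unfolding H_def G_def L_def
    by (intro mult_mono power_increasing) auto
  finally have "\<bar>H ^ n - G ^ n\<bar> / real k ^ n \<le> real n * (4 / L ^ 2) * (2 * L) ^ n / real k ^ n"
    by (rule divide_right_mono) simp
  also have "\<dots> = 4 * real n * 2 ^ n * (L ^ n / L ^ 2 / real k ^ n)"
    by (simp add: power_mult_distrib)
  finally show ?thesis
    unfolding H_def G_def by (simp add: diff_divide_distrib[symmetric])
qed

theorem lemma2p20:
  fixes r n :: nat
  assumes "r \<ge> 1" and "n \<ge> 1"
  shows "(\<forall>k\<ge>1.
            I_krn k r n =
              (\<Sum>s\<in>{1..n} \<rightarrow>\<^sub>E {1..k}.
                 1 / (\<Prod>j\<in>{1..n}. real (s j)) * (fact (k*r - 1) / fact (r - 1) ^ k)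
                 * (\<Prod>i\<in>{1..k}. fact (r - 1 + beta_count n s i)) / fact (k*r + n - 1)))
       \<and> (\<forall>k\<ge>1.
            let Q = I_krn k r n /
                      (real r ^ n / (\<Prod>j\<in>{0..<n}. real (k*r + j)) * harm k ^ n)
            in 1 \<le> Q \<and> Q \<le> upper_bound k n)
       \<and> (\<lambda>k. upper_bound k n - 1) \<in> O(\<lambda>k. ln (real k) powr (-2))
       \<and> (\<lambda>k. I_krn k r n - harm k ^ n / real k ^ n)
            \<in> O(\<lambda>k. ln (real k) powr (real n - 2) / real k ^ n)
       \<and> (\<lambda>k. I_krn k r n - (ln (real k) + euler_mascheroni) ^ n / real k ^ n)
            \<in> O(\<lambda>k. ln (real k) powr (real n - 2) / real k ^ n)"
proof (intro conjI allI impI)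
  fix k :: nat assume k: "k \<ge> 1"
  show "I_krn k r n = (\<Sum>s\<in>{1..n} \<rightarrow>\<^sub>E {1..k}.
          1 / (\<Prod>j\<in>{1..n}. real (s j)) * (fact (k*r - 1) / fact (r - 1) ^ k)
          * (\<Prod>i\<in>{1..k}. fact (r - 1 + beta_count n s i)) / fact (k*r + n - 1))"
    using I_krn_word_sum[OF k assms(1)] by (simp add: word_term_def)
  show "let Q = I_krn k r n / (real r ^ n / (\<Prod>j\<in>{0..<n}. real (k*r + j)) * harm k ^ n)
        in 1 \<le> Q \<and> Q \<le> upper_bound k n"
    using I_krn_ratio_bounds[OF k assms(1)] by (simp add: main_factor_def)
next
  show "(\<lambda>k. upper_bound k n - 1) \<in> O(\<lambda>k. ln (real k) powr (-2))"
    using upper_bound_bigo .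
next
  define X where "X k = ln (real k) powr (real n - 2) / real k ^ n" for k :: nat
  have main: "(\<lambda>k. I_krn k r n - main_factor k r n * harm k ^ n) \<in> O(X)"
    unfolding X_def by (rule bigo_log_scale) (rule I_krn_minus_main_term_le[OF _ assms(1)])
  have factor: "(\<lambda>k. main_factor k r n * harm k ^ n - harm k ^ n / real k ^ n) \<in> O(X)"
    unfolding X_def by (rule bigo_log_scale) (rule main_term_minus_harm_le[OF _ assms(1)])
  have log: "(\<lambda>k. harm k ^ n / real k ^ n - (ln (real k) + euler_mascheroni) ^ n / real k ^ n) \<in> O(X)"
    unfolding X_def by (rule bigo_log_scale) (rule harm_power_minus_log_le)
  from sum_in_bigo(1)[OF main factor]
  show harm: "(\<lambda>k. I_krn k r n - harm k ^ n / real k ^ n) \<in> O(X)" by simp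
  from sum_in_bigo(1)[OF harm log]
  show "(\<lambda>k. I_krn k r n - (ln (real k) + euler_mascheroni) ^ n / real k ^ n) \<in> O(X)" by simp
qed

end
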